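(* Let $n\geq 3$ and let $W\subseteq\operatorname{Sym}^3\mathbb{K}^n$ be a two-dimensional linear space (pencil) of cubic forms such that for every $f\in W$ there exist linear forms $x,y$ with $f\in\operatorname{Sym}^3\langle x,y\rangle$. Then either there is a single two-dimensional space of linear forms $\langle x,y\rangle$ with $W\subseteq \operatorname{Sym}^3\langle x,y\rangle$ (all cubics in $W$ depend on the same set of $2$ variables), or $W=\langle x^2y,\,x^2z\rangle$ for some linearly independent linear forms $x,y,z$.
   Context: $\mathbb{K}$ is an algebraically closed field of characteristic zero; $\operatorname{Sym}^3\mathbb{K}^n$ is identified with the space of cubic forms in $n$ variables. *)

theory Defs
  imports "HOL-Analysis.Finite_Cartesian_Product" "HOL-Computational_Algebra.Polynomial"
begin

text \<open>Cubic forms in n variables are represented by their symmetric coefficient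
tensors (Sym^3 K^n, char 0); linear forms by coefficient vectors in K^n.\<close>

type_synonym ('a, 'n) cubic = "'n \<Rightarrow> 'n \<Rightarrow> 'n \<Rightarrow> 'a"

definition algebraically_closed :: "'a::field itself \<Rightarrow> bool" where
  "algebraically_closed _ \<longleftrightarrow> (\<forall>p::'a poly. 0 < degree p \<longrightarrow> (\<exists>z. poly p z = 0))"

definition is_cubic_form :: "('a, 'n) cubic \<Rightarrow> bool" where
  "is_cubic_form f \<longleftrightarrow> (\<forall>i j k. f i j k = f j i k \<and> f i j k = f i k j)"

text \<open>Symmetric product of three linear forms (the monomial x y z, up to the factor 6).\<close>
definition sym_mono :: "'a::comm_ring_1^'n \<Rightarrow> 'a^'n \<Rightarrow> 'a^'n \<Rightarrow> ('a, 'n) cubic" where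
  "sym_mono x y z = (\<lambda>i j k.
     x$i*y$j*z$k + x$i*y$k*z$j + x$j*y$i*z$k + x$j*y$k*z$i + x$k*y$i*z$j + x$k*y$j*z$i)"

definition Sym3_2 :: "'a::comm_ring_1^'n \<Rightarrow> 'a^'n \<Rightarrow> ('a, 'n) cubic set" where
  "Sym3_2 x y = {f. \<exists>a b c d. f = (\<lambda>i j k.
      a * sym_mono x x x i j k + b * sym_mono x x y i j k
    + c * sym_mono x y y i j k + d * sym_mono y y y i j k)}"

definition lin_indep2 :: "'a::field^'n \<Rightarrow> 'a^'n \<Rightarrow> bool" where
  "lin_indep2 x y \<longleftrightarrow> (\<forall>a b. (\<forall>i. a * x$i + b * y$i = 0) \<longrightarrow> a = 0 \<and> b = 0)"

definition lin_indep3 :: "'a::field^'n \<Rightarrow> 'a^'n \<Rightarrow> 'a^'n \<Rightarrow> bool" where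
  "lin_indep3 x y z \<longleftrightarrow>
     (\<forall>a b c. (\<forall>i. a * x$i + b * y$i + c * z$i = 0) \<longrightarrow> a = 0 \<and> b = 0 \<and> c = 0)"

definition pencil :: "('a::field, 'n) cubic set \<Rightarrow> bool" where
  "pencil W \<longleftrightarrow> (\<exists>f g. is_cubic_form f \<and> is_cubic_form g \<and>
     (\<forall>a b. (\<forall>i j k. a * f i j k + b * g i j k = 0) \<longrightarrow> a = 0 \<and> b = 0) \<and>
     W = {(\<lambda>i j k. a * f i j k + b * g i j k) | a b. True})"

end

theory Submission
  imports Defs "HOL-Analysis.Cartesian_Space"
begin

(* Let E(h) be the span of the second partial derivatives h(-, j, k) of a cubic h. Expanding h
   in the coordinates dual to a basis of a space containing E(h) shows that h lies in
   Sym^3 <x, y> iff E(h) is contained in <x, y>, so the hypothesis says dim E(h) <= 2 on the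
   whole pencil <f, g>. If E(f) + E(g) has dimension at most 2 we are in the first case.
   Otherwise E(f) and E(g) must meet, since E(f) \<inter> E(g) = 0 would give E(f + g) \<supseteq> E(f) + E(g);
   hence E(f) = <x, y> and E(g) = <x, z> with x, y, z independent. A linear form vanishing on
   E(f + g), resp. E(f + 2 g), gives linear relations between the dual coordinates of f and g,
   and since f and g each involve two variables these force f and g to be multiples of x^2 y'
   and x^2 z' with y' = y + c x, z' = z + d x. *)

lemma scalar_product_add_left:
  fixes u v w :: "'a::comm_ring_1^'n"
  shows "scalar_product (u + w) v = scalar_product u v + scalar_product w v"
  by (simp add: scalar_product_def distrib_right sum.distrib)

lemma scalar_product_scale_left:
  fixes u v :: "'a::comm_ring_1^'n"
  shows "scalar_product (c *s u) v = c * scalar_product u v"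
  by (simp add: scalar_product_def sum_distrib_left mult.assoc)

lemma scalar_product_add_right:
  fixes u v w :: "'a::comm_ring_1^'n"
  shows "scalar_product u (v + w) = scalar_product u v + scalar_product u w"
  by (simp add: scalar_product_def distrib_left sum.distrib)

lemma scalar_product_scale_right:
  fixes u v :: "'a::comm_ring_1^'n"
  shows "scalar_product u (c *s v) = c * scalar_product u v"
  unfolding scalar_product_def by (simp add: sum_distrib_left ac_simps)

lemma scalar_product_sum_right:
  fixes u :: "'a::comm_ring_1^'n"
  shows "scalar_product u (\<Sum>a\<in>A. g a) = (\<Sum>a\<in>A. scalar_product u (g a))"
  unfolding scalar_product_def by (simp add: sum_component sum_distrib_left sum.swap[of _ A])

lemma scalar_product_axis_left [simp]:
  fixes v :: "'a::comm_ring_1^'n"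
  shows "scalar_product (axis i 1) v = v $ i"
  by (simp add: scalar_product_def axis_def if_distrib if_distribR cong: if_cong)

lemma scalar_product_eq_0_on_span:
  fixes u :: "'a::field^'n"
  assumes "v \<in> vec.span S" "\<forall>s\<in>S. scalar_product u s = 0"
  shows "scalar_product u v = 0"
  using assms(1)
proof (induction rule: vec.span_induct_alt)
  case base
  then show ?case by (simp add: scalar_product_def)
next
  case (step c x y)
  then show ?case
    using assms(2) by (simp add: scalar_product_add_right scalar_product_scale_right)
qed

definition dual_family :: "('a::comm_ring_1^'n) set \<Rightarrow> ('a^'n \<Rightarrow> 'a^'n) \<Rightarrow> bool" where
  "dual_family B l \<longleftrightarrow> (\<forall>a\<in>B. \<forall>b\<in>B. scalar_product (l a) b = (if a = b then 1 else 0))"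

lemma dual_family_subset: "dual_family B l \<Longrightarrow> A \<subseteq> B \<Longrightarrow> dual_family A l"
  unfolding dual_family_def by blast

lemma dual_family_exists:
  fixes B :: "('a::field^'n) set"
  assumes "vec.independent B"
  obtains l where "dual_family B l"
proof -
  obtain C where C: "B \<subseteq> C" "vec.independent C" "UNIV \<subseteq> vec.span C"
    using vec.maximal_independent_subset_extend[of B UNIV] assms by auto
  define l where "l a = (\<chi> i. vec.representation C (axis i 1) a)" for a
  have "scalar_product (l a) v = vec.representation C v a" for a v
  proof -
    have "scalar_product (l a) v = (\<Sum>i\<in>UNIV. v$i * vec.representation C (axis i 1) a)"
      by (simp add: scalar_product_def l_def mult.commute)
    also have "\<dots> = vec.representation C (\<Sum>i\<in>UNIV. v$i *s axis i 1) a"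
      using C by (simp add: vec.representation_sum vec.representation_scale subset_eq)
    also have "\<dots> = vec.representation C v a"
      by (simp add: basis_expansion)
    finally show ?thesis .
  qed
  then have "dual_family B l"
    using C by (auto simp: dual_family_def vec.representation_basis)
  then show ?thesis by (rule that)
qed

lemma span_expansion_dual_family:
  fixes B :: "('a::field^'n) set"
  assumes "v \<in> vec.span B" "finite B" "dual_family B l"
  shows "v = (\<Sum>a\<in>B. scalar_product (l a) v *s a)"
proof -
  obtain u where u: "v = (\<Sum>b\<in>B. u b *s b)"
    using assms(1,2) vec.span_finite by blast
  have "scalar_product (l a) v = u a" if "a \<in> B" for a
  proof -
    have "scalar_product (l a) v = (\<Sum>b\<in>B. if b = a then u b else 0)"
      using assms(3) that
      by (auto simp: u scalar_product_sum_right scalar_product_scale_right dual_family_def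
          intro!: sum.cong)
    also have "\<dots> = u a"
      using that assms(2) by simp
    finally show ?thesis .
  qed
  then show ?thesis
    by (simp add: u)
qed

section \<open>Essential spaces and polar forms of cubics\<close>

definition second_partial :: "('a, 'n::finite) cubic \<Rightarrow> 'n \<Rightarrow> 'n \<Rightarrow> 'a^'n" where
  "second_partial h j k = (\<chi> i. h i j k)"

definition essential_space :: "('a::field, 'n::finite) cubic \<Rightarrow> ('a^'n) set" where
  "essential_space h = vec.span {second_partial h j k | j k. True}"

lemma subspace_essential_space: "vec.subspace (essential_space h)"
  by (simp add: essential_space_def vec.subspace_span)

lemma essential_space_subset_span:
  assumes "\<And>j k. second_partial h j k \<in> vec.span S"
  shows "essential_space h \<subseteq> vec.span S"
  unfolding essential_space_def using assms by (intro vec.span_minimal) auto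

lemma second_partial_in_essential_space: "second_partial h j k \<in> essential_space h"
  unfolding essential_space_def by (intro vec.span_base) blast

lemma essential_space_lincomb:
  "essential_space (\<lambda>i j k. a * f i j k + b * g i j k)
    \<subseteq> vec.span (essential_space f \<union> essential_space g)"
proof (rule essential_space_subset_span)
  fix j k
  have "second_partial (\<lambda>i j k. a * f i j k + b * g i j k) j k
      = a *s second_partial f j k + b *s second_partial g j k"
    by (simp add: vec_eq_iff second_partial_def)
  then show "second_partial (\<lambda>i j k. a * f i j k + b * g i j k) j k
      \<in> vec.span (essential_space f \<union> essential_space g)"
    by (simp add: vec.span_add vec.span_scale vec.span_base second_partial_in_essential_space)
qed

lemma is_cubic_form_lincomb:
  assumes "is_cubic_form f" "is_cubic_form g"
  shows "is_cubic_form (\<lambda>i j k. a * f i j k + b * g i j k)"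
  using assms unfolding is_cubic_form_def by metis

definition contract :: "('a::comm_ring_1, 'n::finite) cubic \<Rightarrow> 'a^'n \<Rightarrow> 'a^'n \<Rightarrow> 'a^'n" where
  "contract h v w = (\<chi> i. \<Sum>j\<in>UNIV. \<Sum>k\<in>UNIV. v$j * w$k * h i j k)"

definition polar :: "('a::comm_ring_1, 'n::finite) cubic \<Rightarrow> 'a^'n \<Rightarrow> 'a^'n \<Rightarrow> 'a^'n \<Rightarrow> 'a" where
  "polar h u v w = scalar_product u (contract h v w)"

lemma polar_eq_sum: "polar h u v w = (\<Sum>i\<in>UNIV. \<Sum>j\<in>UNIV. \<Sum>k\<in>UNIV. u$i * v$j * w$k * h i j k)"
  by (simp add: polar_def contract_def scalar_product_def sum_distrib_left mult.assoc)

lemma polar_commute12: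
  assumes "is_cubic_form h"
  shows "polar h u v w = polar h v u w"
proof -
  have "polar h v u w = (\<Sum>i\<in>UNIV. \<Sum>j\<in>UNIV. \<Sum>k\<in>UNIV. v$j * u$i * w$k * h j i k)"
    unfolding polar_eq_sum by (rule sum.swap)
  also have "\<dots> = polar h u v w"
    using assms unfolding polar_eq_sum is_cubic_form_def
    by (intro sum.cong refl) (metis mult.commute)
  finally show ?thesis ..
qed

lemma polar_commute23:
  assumes "is_cubic_form h"
  shows "polar h u v w = polar h u w v"
proof -
  have "polar h u w v = (\<Sum>i\<in>UNIV. \<Sum>j\<in>UNIV. \<Sum>k\<in>UNIV. u$i * w$k * v$j * h i k j)"
    unfolding polar_eq_sum by (intro sum.cong refl sum.swap)
  also have "\<dots> = polar h u v w"
    using assms unfolding polar_eq_sum is_cubic_form_def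
    by (intro sum.cong refl) (metis mult.commute mult.assoc)
  finally show ?thesis ..
qed

lemma polar_commute13:
  assumes "is_cubic_form h"
  shows "polar h u v w = polar h w v u"
  by (metis polar_commute12[OF assms] polar_commute23[OF assms])

lemma polar_add_left: "polar h (u + u') v w = polar h u v w + polar h u' v w"
  by (simp add: polar_def scalar_product_add_left)

lemma polar_scale_left: "polar h (c *s u) v w = c * polar h u v w"
  by (simp add: polar_def scalar_product_scale_left)

lemma polar_lincomb:
  "polar (\<lambda>i j k. a * f i j k + b * g i j k) u v w = a * polar f u v w + b * polar g u v w"
  unfolding polar_eq_sum by (simp add: sum.distrib sum_distrib_left distrib_left mult.left_commute)

lemma contract_component: "contract h v w $ i = polar h (axis i 1) v w"
  by (simp add: polar_def)

lemma second_partial_eq_contract: "second_partial h j k = contract h (axis j 1) (axis k 1)"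
  unfolding vec_eq_iff second_partial_def contract_def axis_def
  by (simp add: if_distrib[of "\<lambda>x. x * _"] if_distrib[of "\<lambda>x. _ * x"] cong: if_cong)

lemma polar_axes: "polar h (axis i 1) (axis j 1) (axis k 1) = h i j k"
  by (metis contract_component second_partial_eq_contract second_partial_def vec_lambda_beta)

lemma contract_in_essential_space:
  "contract (h::('a::field, 'n::finite) cubic) v w \<in> essential_space h"
proof -
  have "contract h v w = (\<Sum>j\<in>UNIV. \<Sum>k\<in>UNIV. (v$j * w$k) *s second_partial h j k)"
    by (simp add: vec_eq_iff contract_def second_partial_def sum_component)
  also have "\<dots> \<in> essential_space h"
    unfolding essential_space_def by (intro vec.span_sum vec.span_scale vec.span_base) blast
  finally show ?thesis .
qed

lemma contract_add: "contract (\<lambda>i j k. f i j k + g i j k) v w = contract f v w + contract g v w"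
  by (simp add: vec_eq_iff contract_def distrib_left sum.distrib)

lemma contract_commute:
  assumes "is_cubic_form h"
  shows "contract h v w = contract h w v"
  by (simp add: vec_eq_iff contract_component polar_commute23[OF assms])

lemma polar_eq_0_if_orthogonal:
  fixes h :: "('a::field, 'n::finite) cubic"
  assumes "essential_space h \<subseteq> vec.span S" "\<forall>s\<in>S. scalar_product u s = 0"
  shows "polar h u v w = 0"
  unfolding polar_def
  using contract_in_essential_space assms(1) by (intro scalar_product_eq_0_on_span[OF _ assms(2)]) blast

lemma polar_eq_0_if_orthogonal_in_any_slot:
  fixes h :: "('a::field, 'n::finite) cubic"
  assumes "is_cubic_form h" "essential_space h \<subseteq> vec.span S" "\<forall>s\<in>S. scalar_product u s = 0"
  shows "polar h u v w = 0" "polar h v u w = 0" "polar h v w u = 0"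
  using polar_eq_0_if_orthogonal[OF assms(2,3)] polar_commute12[OF assms(1)]
    polar_commute13[OF assms(1)] by metis+

lemma contract_eq_0_if_orthogonal:
  fixes h :: "('a::field, 'n::finite) cubic"
  assumes "is_cubic_form h" "essential_space h \<subseteq> vec.span S" "\<forall>s\<in>S. scalar_product v s = 0"
  shows "contract h v w = 0"
proof -
  have "polar h (axis i 1) v w = 0" for i
    using polar_commute12[OF assms(1)] polar_eq_0_if_orthogonal[OF assms(2,3)] by metis
  then show ?thesis
    by (simp add: vec_eq_iff contract_component)
qed

lemma polar_expand_second:
  fixes h :: "('a::field, 'n::finite) cubic"
  assumes "is_cubic_form h" "finite B" "dual_family B l" "essential_space h \<subseteq> vec.span B"
  shows "polar h u v w = (\<Sum>b\<in>B. scalar_product v b * polar h u (l b) w)"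
proof -
  have "contract h u w = (\<Sum>b\<in>B. polar h (l b) u w *s b)"
    unfolding polar_def
    using contract_in_essential_space assms(4) by (intro span_expansion_dual_family assms(2,3)) blast
  then have "polar h v u w = (\<Sum>b\<in>B. scalar_product v b * polar h (l b) u w)"
    by (simp add: polar_def[of h v] scalar_product_sum_right scalar_product_scale_right mult.commute)
  then show ?thesis
    by (simp add: polar_commute12[OF assms(1), of u v] polar_commute12[OF assms(1), of u "l _"])
qed

lemma polar_expand_first:
  fixes h :: "('a::field, 'n::finite) cubic"
  assumes "is_cubic_form h" "finite B" "dual_family B l" "essential_space h \<subseteq> vec.span B"
  shows "polar h u v w = (\<Sum>a\<in>B. scalar_product u a * polar h (l a) v w)"
proof -
  have "polar h u v w = polar h v u w"
    by (rule polar_commute12[OF assms(1)])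
  also have "\<dots> = (\<Sum>a\<in>B. scalar_product u a * polar h v (l a) w)"
    by (rule polar_expand_second[OF assms])
  finally show ?thesis
    by (simp only: polar_commute12[OF assms(1), of v])
qed

lemma polar_expand_third:
  fixes h :: "('a::field, 'n::finite) cubic"
  assumes "is_cubic_form h" "finite B" "dual_family B l" "essential_space h \<subseteq> vec.span B"
  shows "polar h u v w = (\<Sum>c\<in>B. scalar_product w c * polar h u v (l c))"
proof -
  have "polar h u v w = polar h u w v"
    by (rule polar_commute23[OF assms(1)])
  also have "\<dots> = (\<Sum>c\<in>B. scalar_product w c * polar h u (l c) v)"
    by (rule polar_expand_second[OF assms])
  finally show ?thesis
    by (simp only: polar_commute23[OF assms(1), of u "l _"])
qed

lemma cubic_expansion:
  fixes h :: "('a::field, 'n::finite) cubic"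
  assumes "is_cubic_form h" "finite B" "dual_family B l" "essential_space h \<subseteq> vec.span B"
  shows "h i j k = (\<Sum>a\<in>B. \<Sum>b\<in>B. \<Sum>c\<in>B. polar h (l a) (l b) (l c) * a$i * b$j * c$k)"
proof -
  have "h i j k = polar h (axis i 1) (axis j 1) (axis k 1)"
    by (simp add: polar_axes)
  also have "\<dots> = (\<Sum>a\<in>B. a$i * polar h (l a) (axis j 1) (axis k 1))"
    by (simp add: polar_expand_first[OF assms, of "axis i 1"])
  also have "\<dots> = (\<Sum>a\<in>B. a$i * (\<Sum>b\<in>B. b$j * polar h (l a) (l b) (axis k 1)))"
    by (simp add: polar_expand_second[OF assms, of _ "axis j 1"])
  also have "\<dots> = (\<Sum>a\<in>B. a$i * (\<Sum>b\<in>B. b$j * (\<Sum>c\<in>B. c$k * polar h (l a) (l b) (l c))))"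
    by (simp add: polar_expand_third[OF assms, of _ _ "axis k 1"])
  finally show ?thesis
    by (simp add: sum_distrib_left mult_ac)
qed

lemma second_partial_expansion:
  fixes h :: "('a::field, 'n::finite) cubic"
  assumes "is_cubic_form h" "finite B" "dual_family B l" "essential_space h \<subseteq> vec.span B"
  shows "second_partial h j k = (\<Sum>b\<in>B. \<Sum>c\<in>B. (b$j * c$k) *s contract h (l b) (l c))"
proof -
  have "h i j k = (\<Sum>b\<in>B. b$j * (\<Sum>c\<in>B. c$k * polar h (axis i 1) (l b) (l c)))" for i
  proof -
    have "h i j k = (\<Sum>b\<in>B. b$j * polar h (axis i 1) (l b) (axis k 1))"
      by (simp add: polar_expand_second[OF assms, of _ "axis j 1"] flip: polar_axes)
    then show ?thesis
      by (simp add: polar_expand_third[OF assms, of _ _ "axis k 1"])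
  qed
  then show ?thesis
    by (simp add: vec_eq_iff second_partial_def sum_component contract_component sum_distrib_left
        mult_ac)
qed

lemma orthogonal_essential_space_if_polar_eq_0:
  fixes h :: "('a::field, 'n::finite) cubic"
  assumes "is_cubic_form h" "finite B" "dual_family B l" "essential_space h \<subseteq> vec.span B"
    and "\<forall>b\<in>B. \<forall>c\<in>B. polar h u (l b) (l c) = 0"
  shows "\<forall>s\<in>essential_space h. scalar_product u s = 0"
proof -
  have "scalar_product u (second_partial h j k) = 0" for j k
    using assms(5)
    by (simp add: second_partial_expansion[OF assms(1-4)] scalar_product_sum_right
        scalar_product_scale_right flip: polar_def)
  then show ?thesis
    unfolding essential_space_def by (auto intro: scalar_product_eq_0_on_span)
qed

lemma binary_cubic_expansion:
  fixes h :: "('a::field_char_0, 'n::finite) cubic"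
  assumes "is_cubic_form h" "x \<noteq> y" "dual_family {x, y} l" "essential_space h \<subseteq> vec.span {x, y}"
  shows "h = (\<lambda>i j k. polar h (l x) (l x) (l x) / 6 * sym_mono x x x i j k
      + polar h (l x) (l x) (l y) / 2 * sym_mono x x y i j k
      + polar h (l x) (l y) (l y) / 2 * sym_mono x y y i j k
      + polar h (l y) (l y) (l y) / 6 * sym_mono y y y i j k)"
proof (intro ext)
  fix i j k
  let ?p = "\<lambda>a b c. polar h (l a) (l b) (l c)"
  have sym: "?p y x x = ?p x x y" "?p x y x = ?p x x y" "?p y x y = ?p x y y" "?p y y x = ?p x y y"
    using polar_commute12[OF assms(1)] polar_commute23[OF assms(1)] by metis+
  have "h i j k = ?p x x x * (x$i * x$j * x$k)
      + ?p x x y * (x$i * x$j * y$k + x$i * y$j * x$k + y$i * x$j * x$k)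
      + ?p x y y * (x$i * y$j * y$k + y$i * x$j * y$k + y$i * y$j * x$k)
      + ?p y y y * (y$i * y$j * y$k)"
    using assms(2) by (simp add: cubic_expansion[OF assms(1) _ assms(3,4)] sym algebra_simps)
  then show "h i j k = ?p x x x / 6 * sym_mono x x x i j k + ?p x x y / 2 * sym_mono x x y i j k
      + ?p x y y / 2 * sym_mono x y y i j k + ?p y y y / 6 * sym_mono y y y i j k"
    by (simp add: sym_mono_def algebra_simps)
qed

lemma Sym3_2_if_essential_space_subset:
  fixes h :: "('a::field_char_0, 'n::finite) cubic"
  assumes "is_cubic_form h" "vec.independent {x, y}" "x \<noteq> y"
    and "essential_space h \<subseteq> vec.span {x, y}"
  shows "h \<in> Sym3_2 x y"
proof -
  obtain l where "dual_family {x, y} l"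
    using dual_family_exists[OF assms(2)] .
  from binary_cubic_expansion[OF assms(1,3) this assms(4)] show ?thesis
    unfolding Sym3_2_def by blast
qed

lemma second_partial_sym_mono:
  "second_partial (sym_mono u v w) j k =
    (v$j * w$k + v$k * w$j) *s u + (u$j * w$k + u$k * w$j) *s v + (u$j * v$k + u$k * v$j) *s w"
  by (simp add: vec_eq_iff second_partial_def sym_mono_def algebra_simps)

lemma essential_space_Sym3_2:
  fixes f :: "('a::field, 'n::finite) cubic"
  assumes "f \<in> Sym3_2 x y"
  shows "essential_space f \<subseteq> vec.span {x, y}"
proof -
  obtain a b c d where f: "f = (\<lambda>i j k. a * sym_mono x x x i j k + b * sym_mono x x y i j k
      + c * sym_mono x y y i j k + d * sym_mono y y y i j k)"
    using assms by (auto simp: Sym3_2_def)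
  have "second_partial (sym_mono u v w) j k \<in> vec.span {x, y}"
    if "u \<in> {x, y}" "v \<in> {x, y}" "w \<in> {x, y}" for u v w j k
    unfolding second_partial_sym_mono using that
    by (intro vec.span_add vec.span_scale vec.span_base)
  moreover have "second_partial f j k = a *s second_partial (sym_mono x x x) j k
      + b *s second_partial (sym_mono x x y) j k + c *s second_partial (sym_mono x y y) j k
      + d *s second_partial (sym_mono y y y) j k" for j k
    by (simp add: f second_partial_def vec_eq_iff)
  ultimately have "second_partial f j k \<in> vec.span {x, y}" for j k
    by (simp add: vec.span_add vec.span_scale)
  then show ?thesis
    by (rule essential_space_subset_span)
qed

lemma sym_mono_shift_third:
  "sym_mono x y (w + c *s v) i j k = sym_mono x y w i j k + c * sym_mono x y v i j k"
  by (simp add: sym_mono_def algebra_simps)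

lemma binary_cubic_eq_sym_mono:
  fixes h :: "('a::field_char_0, 'n::finite) cubic"
  assumes "is_cubic_form h" "x \<noteq> y" "dual_family {x, y} l" "essential_space h \<subseteq> vec.span {x, y}"
    and "polar h (l x) (l y) (l y) = 0" "polar h (l y) (l y) (l y) = 0"
    and "polar h (l x) (l x) (l y) \<noteq> 0"
  defines "c \<equiv> polar h (l x) (l x) (l y) / 2"
    and "d \<equiv> polar h (l x) (l x) (l x) / (3 * polar h (l x) (l x) (l y))"
  shows "h = (\<lambda>i j k. c * sym_mono x x (y + d *s x) i j k)"
proof -
  have cd: "c * d = polar h (l x) (l x) (l x) / 6"
    using assms(7) unfolding c_def d_def by (simp add: field_simps)
  have "h = (\<lambda>i j k. polar h (l x) (l x) (l x) / 6 * sym_mono x x x i j k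
      + polar h (l x) (l x) (l y) / 2 * sym_mono x x y i j k)"
    using binary_cubic_expansion[OF assms(1-4)] assms(5,6) by simp
  also have "\<dots> = (\<lambda>i j k. c * sym_mono x x (y + d *s x) i j k)"
    unfolding sym_mono_shift_third distrib_left mult.assoc[symmetric] cd
    by (simp add: c_def add.commute)
  finally show ?thesis .
qed

section \<open>Essential spaces of sums\<close>

lemma disjoint_if_span_Int_eq_0:
  fixes A B :: "('a::field^'n) set"
  assumes "vec.independent A" "vec.span A \<inter> vec.span B = {0}"
  shows "A \<inter> B = {}"
proof -
  have "A \<inter> B \<subseteq> vec.span A \<inter> vec.span B"
    using vec.span_superset[of A] vec.span_superset[of B] by blast
  moreover have "0 \<notin> A"
    using assms(1) vec.dependent_zero by blast
  ultimately show ?thesis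
    using assms(2) by auto
qed

lemma independent_Un_if_span_Int_eq_0:
  fixes A B :: "('a::field^'n) set"
  assumes "vec.independent A" "vec.independent B" "vec.span A \<inter> vec.span B = {0}"
  shows "vec.independent (A \<union> B)"
proof -
  have fin: "finite A" "finite B"
    using assms(1,2) vec.finiteI_independent by blast+
  have "card (A \<union> B) = card A + card B"
    using fin disjoint_if_span_Int_eq_0[OF assms(1,3)] by (simp add: card_Un_disjoint)
  also have "\<dots> = vec.dim (vec.span A) + vec.dim (vec.span B)"
    using assms(1,2) by (simp add: vec.dim_span vec.dim_eq_card_independent)
  also have "\<dots> = vec.dim (vec.span (A \<union> B))"
    using vec.dim_sums_Int[of "vec.span A" "vec.span B"] assms(3)
    by (simp add: vec.span_Un vec.subspace_span)
  finally show ?thesis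
    using fin by (intro vec.card_le_dim_spanning[of _ "vec.span (A \<union> B)"]) (auto intro: vec.span_base)
qed

lemma dual_family_of_direct_sum:
  fixes S T :: "('a::field^'n) set"
  assumes "vec.subspace S" "vec.subspace T" "S \<inter> T = {0}"
  obtains U V l where "S \<subseteq> vec.span U" "T \<subseteq> vec.span V" "finite (U \<union> V)" "U \<inter> V = {}"
    "dual_family (U \<union> V) l"
proof -
  obtain U where U: "U \<subseteq> S" "vec.independent U" "S \<subseteq> vec.span U"
    by (rule vec.maximal_independent_subset)
  obtain V where V: "V \<subseteq> T" "vec.independent V" "T \<subseteq> vec.span V"
    by (rule vec.maximal_independent_subset)
  have "vec.span U \<subseteq> S" "vec.span V \<subseteq> T"
    by (rule vec.span_minimal[OF U(1) assms(1)], rule vec.span_minimal[OF V(1) assms(2)])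
  then have UV: "vec.span U \<inter> vec.span V = {0}"
    using assms(3) vec.span_zero by blast
  then have indep: "vec.independent (U \<union> V)"
    by (rule independent_Un_if_span_Int_eq_0[OF U(2) V(2)])
  then have "finite (U \<union> V)"
    using vec.finiteI_independent by blast
  moreover obtain l where "dual_family (U \<union> V) l"
    using dual_family_exists[OF indep] .
  ultimately show ?thesis
    by (rule that[OF U(3) V(3) _ disjoint_if_span_Int_eq_0[OF U(2) UV]])
qed

lemma essential_space_subset_essential_space_add:
  fixes f g :: "('a::field, 'n::finite) cubic"
  assumes "is_cubic_form f" "is_cubic_form g" "essential_space f \<inter> essential_space g = {0}"
  shows "essential_space f \<subseteq> essential_space (\<lambda>i j k. f i j k + g i j k)"
proof -
  let ?h = "\<lambda>i j k. f i j k + g i j k"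
  obtain U V l where U: "essential_space f \<subseteq> vec.span U" and V: "essential_space g \<subseteq> vec.span V"
    and fin: "finite (U \<union> V)" and disjoint: "U \<inter> V = {}" and l: "dual_family (U \<union> V) l"
    by (rule dual_family_of_direct_sum[OF subspace_essential_space subspace_essential_space assms(3)])
  have orth_U: "\<forall>s\<in>U. scalar_product (l b) s = 0" if "b \<in> V" for b
    using l that disjoint unfolding dual_family_def by auto
  have orth_V: "\<forall>s\<in>V. scalar_product (l b) s = 0" if "b \<in> U" for b
    using l that disjoint unfolding dual_family_def by auto
  have "contract f (l b) (l c) \<in> essential_space ?h" if "b \<in> U \<union> V" "c \<in> U \<union> V" for b c
  proof (cases "b \<in> U \<and> c \<in> U")
    case True
    then have "contract g (l b) (l c) = 0"
      using contract_eq_0_if_orthogonal[OF assms(2) V orth_V] by blast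
    then have "contract f (l b) (l c) = contract ?h (l b) (l c)"
      by (simp add: contract_add)
    then show ?thesis
      by (simp add: contract_in_essential_space)
  next
    case False
    then have "b \<in> V \<or> c \<in> V"
      using that by blast
    moreover have "contract f (l b) (l c) = contract f (l c) (l b)"
      by (rule contract_commute[OF assms(1)])
    ultimately have "contract f (l b) (l c) = 0"
      using contract_eq_0_if_orthogonal[OF assms(1) U orth_U] by auto
    then show ?thesis
      by (simp add: essential_space_def vec.span_zero)
  qed
  moreover have "essential_space f \<subseteq> vec.span (U \<union> V)"
    using U vec.span_mono[of U "U \<union> V"] by blast
  ultimately have "second_partial f j k \<in> vec.span (essential_space ?h)" for j k
    unfolding second_partial_expansion[OF assms(1) fin l \<open>essential_space f \<subseteq> vec.span (U \<union> V)\<close>]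
    by (intro vec.span_sum vec.span_scale vec.span_base)
  then show ?thesis
    by (simp add: essential_space_subset_span essential_space_def[of ?h] vec.span_span)
qed

lemma span_essential_spaces_subset_essential_space_add:
  fixes f g :: "('a::field, 'n::finite) cubic"
  assumes "is_cubic_form f" "is_cubic_form g" "essential_space f \<inter> essential_space g = {0}"
  shows "vec.span (essential_space f \<union> essential_space g)
    \<subseteq> essential_space (\<lambda>i j k. f i j k + g i j k)"
proof -
  have "(\<lambda>i j k. g i j k + f i j k) = (\<lambda>i j k. f i j k + g i j k)"
    by (simp add: add.commute)
  then have "essential_space g \<subseteq> essential_space (\<lambda>i j k. f i j k + g i j k)"
    using essential_space_subset_essential_space_add[OF assms(2,1)] assms(3) by (simp add: Int_commute)
  then show ?thesis
    using essential_space_subset_essential_space_add[OF assms]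
    by (intro vec.span_minimal subspace_essential_space) blast
qed

lemma dim_le_2_if_subset_span_pair:
  fixes S :: "('a::field^'n) set"
  assumes "S \<subseteq> vec.span {p, q}"
  shows "vec.dim S \<le> 2"
proof -
  have "card {p, q} \<le> 2"
    by (simp add: card_insert_le_m1)
  then show ?thesis
    using vec.dim_le_card[OF assms] by simp
qed

lemma subset_span_pair_if_dim_le_2:
  fixes S :: "('a::field^'n) set"
  assumes "vec.dim S \<le> 2" "CARD('n) \<ge> 2"
  obtains x y where "vec.independent {x, y}" "x \<noteq> y" "S \<subseteq> vec.span {x, y}"
proof -
  obtain B where B: "B \<subseteq> S" "vec.independent B" "S \<subseteq> vec.span B" "card B = vec.dim S"
    by (rule vec.basis_exists)
  obtain C where C: "B \<subseteq> C" "vec.independent C" "UNIV \<subseteq> vec.span C"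
    using vec.maximal_independent_subset_extend[of B UNIV] B(2) by auto
  have "finite C"
    using C(2) vec.finiteI_independent by blast
  have "card C = CARD('n)"
    using vec.dim_eq_card_independent[OF C(2)] C(3) vec_dim_card
    by (metis top.extremum_uniqueI vec.dim_span)
  then have "card (C - B) \<ge> 2 - card B"
    using assms(2) card_Diff_subset[OF finite_subset[OF C(1) \<open>finite C\<close>] C(1)] by simp
  then obtain D where D: "D \<subseteq> C - B" "card D = 2 - card B"
    by (meson obtain_subset_with_card_n)
  have "finite B" "finite D"
    using \<open>finite C\<close> C(1) D(1) finite_subset by blast+
  moreover have "B \<inter> D = {}"
    using D(1) by blast
  ultimately have "card (B \<union> D) = 2"
    using D(2) B(4) assms(1) by (simp add: card_Un_disjoint)
  then obtain x y where xy: "B \<union> D = {x, y}" "x \<noteq> y"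
    unfolding card_2_iff by blast
  have "B \<union> D \<subseteq> C"
    using C(1) D(1) by blast
  then have "vec.independent {x, y}"
    unfolding xy(1)[symmetric] by (rule vec.independent_mono[OF C(2)])
  moreover have "S \<subseteq> vec.span {x, y}"
    unfolding xy(1)[symmetric] using B(3) vec.span_mono[of B "B \<union> D"] by blast
  ultimately show ?thesis
    using that xy(2) by blast
qed

lemma subspace_eq_span_pair:
  fixes U :: "('a::field^'n) set"
  assumes "vec.subspace U" "vec.dim U \<le> 2" "x \<in> U" "y \<in> U" "vec.independent {x, y}" "x \<noteq> y"
  shows "U = vec.span {x, y}"
proof
  show "U \<subseteq> vec.span {x, y}"
    using assms(2-6) by (intro vec.card_ge_dim_independent) auto
  show "vec.span {x, y} \<subseteq> U"
    using assms(1,3,4) by (intro vec.span_minimal) auto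
qed

lemma two_planes_meeting_in_line:
  fixes U V :: "('a::field^'n) set"
  assumes "vec.subspace U" "vec.subspace V" "vec.dim U \<le> 2" "vec.dim V \<le> 2"
    and "U \<inter> V \<noteq> {0}" "\<not> vec.dim (vec.span (U \<union> V)) \<le> 2"
  obtains x y z where "vec.independent {x, y, z}" "x \<noteq> y" "x \<noteq> z" "y \<noteq> z"
    "U = vec.span {x, y}" "V = vec.span {x, z}"
proof -
  have not_nested: "\<not> U \<subseteq> V" "\<not> V \<subseteq> U"
  proof -
    have "vec.dim (vec.span (U \<union> V)) \<le> 2" if "A \<subseteq> B" "vec.subspace B" "vec.dim B \<le> 2"
      "U \<union> V = A \<union> B" for A B
      using that vec.dim_subset[OF vec.span_minimal[of "U \<union> V" B]] by auto
    then show "\<not> U \<subseteq> V" "\<not> V \<subseteq> U"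
      using assms by (metis sup_commute)+
  qed
  obtain x where x: "x \<in> U" "x \<in> V" "x \<noteq> 0"
    using assms(5) vec.subspace_0[OF assms(1)] vec.subspace_0[OF assms(2)] by blast
  have "vec.span {x} \<subseteq> U" "vec.span {x} \<subseteq> V"
    using x by (simp_all add: vec.span_minimal assms(1,2))
  then obtain y z where y: "y \<in> U" "y \<notin> vec.span {x}" and z: "z \<in> V" "z \<notin> vec.span {x}"
    using not_nested by blast
  then have "x \<noteq> y" "x \<noteq> z"
    using vec.span_base[of x "{x}"] by auto
  have "vec.independent {x, y}" "vec.independent {x, z}"
    using vec.independent_insertI[OF y(2)] vec.independent_insertI[OF z(2)] x(3)
    by (simp_all add: insert_commute)
  then have U: "U = vec.span {x, y}" and V: "V = vec.span {x, z}"
    using subspace_eq_span_pair assms(1-4) x y z \<open>x \<noteq> y\<close> \<open>x \<noteq> z\<close> by blast+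
  have "z \<notin> vec.span {x, y}"
  proof
    assume "z \<in> vec.span {x, y}"
    then have "V \<subseteq> U"
      unfolding U V using vec.span_mono[of "{x}" "{x, y}"] vec.span_base[of x "{x}"]
      by (intro vec.span_minimal) (auto simp: vec.subspace_span)
    then show False
      using not_nested by blast
  qed
  then have "vec.independent {x, y, z}" "y \<noteq> z"
    using vec.independent_insertI[OF _ \<open>vec.independent {x, y}\<close>, of z] vec.span_base[of y "{x, y}"]
    by (auto simp: insert_commute)
  then show ?thesis
    using that \<open>x \<noteq> y\<close> \<open>x \<noteq> z\<close> U V by blast
qed

lemma lin_indep2_if_independent:
  fixes x y :: "'a::field^'n"
  assumes "vec.independent {x, y}" "x \<noteq> y"
  shows "lin_indep2 x y"
  unfolding lin_indep2_def
proof (intro allI impI)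
  fix a b
  assume "\<forall>i. a * x$i + b * y$i = 0"
  define u where "u v = (if v = x then a else b)" for v
  have "(\<Sum>v\<in>{x, y}. u v *s v) = a *s x + b *s y"
    using assms(2) by (simp add: u_def)
  also have "\<dots> = 0"
    using \<open>\<forall>i. a * x$i + b * y$i = 0\<close> by (simp add: vec_eq_iff)
  finally have "\<forall>v\<in>{x, y}. u v = 0"
    using assms(1) vec.dependent_finite[of "{x, y}"] by blast
  then show "a = 0 \<and> b = 0"
    using assms(2) by (simp add: u_def)
qed

lemma lin_indep3_if_independent:
  fixes x y z :: "'a::field^'n"
  assumes "vec.independent {x, y, z}" "x \<noteq> y" "x \<noteq> z" "y \<noteq> z"
  shows "lin_indep3 x y z"
  unfolding lin_indep3_def
proof (intro allI impI)
  fix a b c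
  assume "\<forall>i. a * x$i + b * y$i + c * z$i = 0"
  define u where "u v = (if v = x then a else if v = y then b else c)" for v
  have "(\<Sum>v\<in>{x, y, z}. u v *s v) = a *s x + b *s y + c *s z"
    using assms(2-4) by (simp add: u_def)
  also have "\<dots> = 0"
    using \<open>\<forall>i. a * x$i + b * y$i + c * z$i = 0\<close> by (simp add: vec_eq_iff)
  finally have "\<forall>v\<in>{x, y, z}. u v = 0"
    using assms(1) vec.dependent_finite[of "{x, y, z}"] by blast
  then show "a = 0 \<and> b = 0 \<and> c = 0"
    using assms(2-4) by (simp add: u_def)
qed

lemma lin_indep3_shear:
  assumes "lin_indep3 x y z"
  shows "lin_indep3 x (y + c *s x) (z + d *s x)"
  unfolding lin_indep3_def
proof (intro allI impI)
  fix \<alpha> \<beta> \<gamma>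
  assume "\<forall>i. \<alpha> * x$i + \<beta> * (y + c *s x)$i + \<gamma> * (z + d *s x)$i = 0"
  then have "\<forall>i. (\<alpha> + \<beta> * c + \<gamma> * d) * x$i + \<beta> * y$i + \<gamma> * z$i = 0"
    by (simp add: algebra_simps)
  then have "\<alpha> + \<beta> * c + \<gamma> * d = 0 \<and> \<beta> = 0 \<and> \<gamma> = 0"
    using assms unfolding lin_indep3_def by blast
  then show "\<alpha> = 0 \<and> \<beta> = 0 \<and> \<gamma> = 0"
    by auto
qed

section \<open>Pencils of binary cubics\<close>

(* For the polar values a0, ..., a3 of a binary cubic this says that its catalecticant
   [[a0, a1, a2], [a1, a2, a3]] has rank 2, i.e. the cubic genuinely involves both variables. *)
definition nondegenerate_binary :: "'a::field \<Rightarrow> 'a \<Rightarrow> 'a \<Rightarrow> 'a \<Rightarrow> bool" where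
  "nondegenerate_binary a0 a1 a2 a3 \<longleftrightarrow>
    (\<forall>n1 n2. n1*a0 + n2*a1 = 0 \<and> n1*a1 + n2*a2 = 0 \<and> n1*a2 + n2*a3 = 0 \<longrightarrow> n1 = 0 \<and> n2 = 0)"

lemma nondegenerate_binary_kernel_proportional:
  fixes a0 a1 a2 a3 :: "'a::field"
  assumes "nondegenerate_binary a0 a1 a2 a3"
    and "m1*a1 + m2*a2 = 0" "m1*a2 + m2*a3 = 0" "k1*a1 + k2*a2 = 0" "k1*a2 + k2*a3 = 0"
  shows "(k1*a0 + k2*a1) * m1 = (m1*a0 + m2*a1) * k1"
proof -
  define c c' where "c = m1*a0 + m2*a1" and "c' = k1*a0 + k2*a1"
  let ?n1 = "c' * m1 - c * k1" and ?n2 = "c' * m2 - c * k2"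
  have "?n1*a0 + ?n2*a1 = 0"
    unfolding c_def c'_def by algebra
  moreover have "?n1*a1 + ?n2*a2 = 0"
    using assms(2,4) by algebra
  moreover have "?n1*a2 + ?n2*a3 = 0"
    using assms(3,5) by algebra
  ultimately have "?n1 = 0"
    using assms(1) unfolding nondegenerate_binary_def by blast
  then show ?thesis
    unfolding c_def c'_def by simp
qed

lemma nondegenerate_binary_kernel_nonzero:
  fixes a0 a1 a2 a3 b0 b1 b2 b3 :: "'a::field"
  assumes "nondegenerate_binary a0 a1 a2 a3" "nondegenerate_binary b0 b1 b2 b3"
    and "t \<noteq> 0" "(m1, m2, m3) \<noteq> (0, 0, 0)"
    and "m1*a1 + m2*a2 = 0" "m1*a2 + m2*a3 = 0" "m1*b1 + m3*b2 = 0" "m1*b2 + m3*b3 = 0"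
    and "(m1*a0 + m2*a1) + t * (m1*b0 + m3*b1) = 0"
  shows "m1*a0 + m2*a1 \<noteq> 0"
proof
  assume c: "m1*a0 + m2*a1 = 0"
  then have "m1 = 0 \<and> m2 = 0"
    using assms(1,5,6) unfolding nondegenerate_binary_def by blast
  moreover have "m1*b0 + m3*b1 = 0"
    using assms(3,9) c by simp
  then have "m1 = 0 \<and> m3 = 0"
    using assms(2,7,8) unfolding nondegenerate_binary_def by blast
  ultimately show False
    using assms(4) by simp
qed

lemma binary_pencil_coefficients:
  fixes a0 a1 a2 a3 b0 b1 b2 b3 :: "'a::field_char_0"
  assumes "nondegenerate_binary a0 a1 a2 a3" "nondegenerate_binary b0 b1 b2 b3"
    and "\<And>t. t \<in> {1, 2} \<Longrightarrow> \<exists>m1 m2 m3. (m1, m2, m3) \<noteq> (0, 0, 0) \<and>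
      m1*a1 + m2*a2 = 0 \<and> m1*a2 + m2*a3 = 0 \<and> m1*b1 + m3*b2 = 0 \<and> m1*b2 + m3*b3 = 0 \<and>
      (m1*a0 + m2*a1) + t * (m1*b0 + m3*b1) = 0"
  shows "a2 = 0 \<and> a3 = 0 \<and> b2 = 0 \<and> b3 = 0 \<and> a1 \<noteq> 0 \<and> b1 \<noteq> 0"
proof -
  obtain m1 m2 m3 where m: "(m1, m2, m3) \<noteq> (0, 0, 0)"
    "m1*a1 + m2*a2 = 0" "m1*a2 + m2*a3 = 0" "m1*b1 + m3*b2 = 0" "m1*b2 + m3*b3 = 0"
    "(m1*a0 + m2*a1) + 1 * (m1*b0 + m3*b1) = 0"
    using assms(3)[of 1] by blast
  obtain k1 k2 k3 where k: "(k1, k2, k3) \<noteq> (0, 0, 0)"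
    "k1*a1 + k2*a2 = 0" "k1*a2 + k2*a3 = 0" "k1*b1 + k3*b2 = 0" "k1*b2 + k3*b3 = 0"
    "(k1*a0 + k2*a1) + 2 * (k1*b0 + k3*b1) = 0"
    using assms(3)[of 2] by blast
  define c d c' d' where "c = m1*a0 + m2*a1" and "d = m1*b0 + m3*b1"
    and "c' = k1*a0 + k2*a1" and "d' = k1*b0 + k3*b1"
  have "c \<noteq> 0" "c' \<noteq> 0"
    unfolding c_def c'_def
    using nondegenerate_binary_kernel_nonzero[OF assms(1,2) _ m(1-6)]
      nondegenerate_binary_kernel_nonzero[OF assms(1,2) _ k(1-6)] by simp_all
  have "c = - d" "c' = - (2 * d')"
    using m(6) k(6) unfolding c_def d_def c'_def d'_def by (simp_all add: add_eq_0_iff2)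
  \<comment> \<open>The kernel vectors for \<open>t = 1\<close> and \<open>t = 2\<close> are proportional on both catalecticants,
    which is only compatible with \<open>c = - d\<close> and \<open>c' = - 2 d'\<close> if \<open>m1 = 0\<close>.\<close>
  have "c' * m1 = c * k1" "d' * m1 = d * k1"
    unfolding c_def d_def c'_def d'_def
    using nondegenerate_binary_kernel_proportional[OF assms(1) m(2,3) k(2,3)]
      nondegenerate_binary_kernel_proportional[OF assms(2) m(4,5) k(4,5)] by simp_all
  then have "2 * (d' * m1) = d' * m1"
    using \<open>c = - d\<close> \<open>c' = - (2 * d')\<close> by (simp add: mult.assoc)
  then have "d' * m1 = 0"
    by (simp add: algebra_simps)
  then have "m1 = 0"
    using \<open>c' \<noteq> 0\<close> \<open>c' = - (2 * d')\<close> by simp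
  then have "m2 * a1 \<noteq> 0" "m3 * b1 \<noteq> 0"
    using \<open>c \<noteq> 0\<close> \<open>c = - d\<close> unfolding c_def d_def by auto
  then show ?thesis
    using m(2-5) \<open>m1 = 0\<close> by simp
qed

lemma exists_nonzero_solution_2x3:
  fixes P1 P2 P3 Q1 Q2 Q3 :: "'a::field"
  obtains m1 m2 m3 where "(m1, m2, m3) \<noteq> (0, 0, 0)"
    "m1 * P1 + m2 * P2 + m3 * P3 = 0" "m1 * Q1 + m2 * Q2 + m3 * Q3 = 0"
proof -
  define c1 c2 c3 where "c1 = P2 * Q3 - P3 * Q2" and "c2 = P3 * Q1 - P1 * Q3"
    and "c3 = P1 * Q2 - P2 * Q1"
  \<comment> \<open>\<open>(c1, c2, c3)\<close> is the cross product of \<open>P\<close> and \<open>Q\<close>; if it vanishes, \<open>P\<close> and \<open>Q\<close> are parallel.\<close>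
  show ?thesis
  proof (cases "(c1, c2, c3) = (0, 0, 0)")
    case False
    then show ?thesis
      by (intro that[of c1 c2 c3]) (simp_all add: c1_def c2_def c3_def algebra_simps)
  next
    case c: True
    show ?thesis
    proof (cases "(P2, - P1, 0) = (0, 0, 0 :: 'a)")
      case False
      then show ?thesis
        using c by (intro that[of P2 "- P1" 0]) (simp_all add: c3_def algebra_simps)
    next
      case True
      show ?thesis
      proof (cases "P3 = 0")
        case False
        then show ?thesis
          using c True by (intro that[of P3 0 "- P1"]) (simp_all add: c2_def algebra_simps)
      next
        case P3: True
        show ?thesis
        proof (cases "(Q2, - Q1, 0) = (0, 0, 0 :: 'a)")
          case False
          then show ?thesis
            using True P3 by (intro that[of Q2 "- Q1" 0]) (simp_all add: algebra_simps)
        next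
          case True
          then show ?thesis
            using \<open>(P2, - P1, 0) = (0, 0, 0)\<close> by (intro that[of 1 0 0]) simp_all
        qed
      qed
    qed
  qed
qed

lemma nondegenerate_binary_polar:
  fixes h :: "('a::field, 'n::finite) cubic"
  assumes "is_cubic_form h" "x \<noteq> y" "dual_family {x, y} l" "essential_space h = vec.span {x, y}"
  shows "nondegenerate_binary (polar h (l x) (l x) (l x)) (polar h (l x) (l x) (l y))
    (polar h (l x) (l y) (l y)) (polar h (l y) (l y) (l y))"
  unfolding nondegenerate_binary_def
proof (intro allI impI)
  fix n1 n2
  let ?p = "\<lambda>a b c. polar h (l a) (l b) (l c)" and ?u = "n1 *s l x + n2 *s l y"
  assume "n1 * ?p x x x + n2 * ?p x x y = 0 \<and> n1 * ?p x x y + n2 * ?p x y y = 0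
    \<and> n1 * ?p x y y + n2 * ?p y y y = 0"
  moreover have "?p y x x = ?p x x y" "?p x y x = ?p x x y" "?p y x y = ?p x y y" "?p y y x = ?p x y y"
    using polar_commute12[OF assms(1)] polar_commute13[OF assms(1)] by metis+
  ultimately have "\<forall>b\<in>{x, y}. \<forall>c\<in>{x, y}. polar h ?u (l b) (l c) = 0"
    by (auto simp: polar_add_left polar_scale_left)
  then have "\<forall>s\<in>essential_space h. scalar_product ?u s = 0"
    using assms by (intro orthogonal_essential_space_if_polar_eq_0) auto
  then have "scalar_product ?u x = 0" "scalar_product ?u y = 0"
    using assms(4) vec.span_base[of _ "{x, y}"] by auto
  then show "n1 = 0 \<and> n2 = 0"
    using assms(2,3) by (simp add: scalar_product_add_left scalar_product_scale_left dual_family_def)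
qed

lemma pencil_member_kernel_equations:
  fixes f g :: "('a::field, 'n::finite) cubic"
  assumes "is_cubic_form f" "is_cubic_form g" "dual_family {x, y, z} l"
    and "x \<noteq> y" "x \<noteq> z" "y \<noteq> z"
    and "essential_space f \<subseteq> vec.span {x, y}" "essential_space g \<subseteq> vec.span {x, z}"
    and "essential_space (\<lambda>i j k. f i j k + t * g i j k) \<subseteq> vec.span {p, q}" "t \<noteq> 0"
  defines "a0 \<equiv> polar f (l x) (l x) (l x)" and "a1 \<equiv> polar f (l x) (l x) (l y)"
    and "a2 \<equiv> polar f (l x) (l y) (l y)" and "a3 \<equiv> polar f (l y) (l y) (l y)"
    and "b0 \<equiv> polar g (l x) (l x) (l x)" and "b1 \<equiv> polar g (l x) (l x) (l z)"
    and "b2 \<equiv> polar g (l x) (l z) (l z)" and "b3 \<equiv> polar g (l z) (l z) (l z)"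
  shows "\<exists>m1 m2 m3. (m1, m2, m3) \<noteq> (0, 0, 0) \<and>
    m1*a1 + m2*a2 = 0 \<and> m1*a2 + m2*a3 = 0 \<and> m1*b1 + m3*b2 = 0 \<and> m1*b2 + m3*b3 = 0 \<and>
    (m1*a0 + m2*a1) + t * (m1*b0 + m3*b1) = 0"
proof -
  let ?h = "\<lambda>i j k. f i j k + t * g i j k"
  obtain m1 m2 m3 where m: "(m1, m2, m3) \<noteq> (0, 0, 0)"
    "m1 * scalar_product (l x) p + m2 * scalar_product (l y) p + m3 * scalar_product (l z) p = 0"
    "m1 * scalar_product (l x) q + m2 * scalar_product (l y) q + m3 * scalar_product (l z) q = 0"
    by (rule exists_nonzero_solution_2x3)
  let ?u = "m1 *s l x + m2 *s l y + m3 *s l z"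
  have "\<forall>s\<in>{p, q}. scalar_product ?u s = 0"
    using m(2,3) by (simp add: scalar_product_add_left scalar_product_scale_left)
  then have zero: "polar ?h ?u v w = 0" for v w
    by (rule polar_eq_0_if_orthogonal[OF assms(9)])
  have expand: "polar ?h ?u v w = m1 * polar f (l x) v w + m2 * polar f (l y) v w
      + m3 * polar f (l z) v w + t * (m1 * polar g (l x) v w + m2 * polar g (l y) v w
      + m3 * polar g (l z) v w)" for v w
    using polar_lincomb[of 1 f t g] by (simp add: polar_add_left polar_scale_left algebra_simps)
  have "\<forall>s\<in>{x, y}. scalar_product (l z) s = 0" "\<forall>s\<in>{x, z}. scalar_product (l y) s = 0"
    using assms(3-6) by (auto simp: dual_family_def)
  note f_z = polar_eq_0_if_orthogonal_in_any_slot[OF assms(1,7) this(1)]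
    and g_y = polar_eq_0_if_orthogonal_in_any_slot[OF assms(2,8) this(2)]
  have table: "polar f (l y) (l x) (l x) = a1" "polar f (l x) (l y) (l x) = a1"
    "polar f (l y) (l x) (l y) = a2" "polar f (l y) (l y) (l x) = a2"
    "polar g (l z) (l x) (l x) = b1" "polar g (l x) (l z) (l x) = b1"
    "polar g (l z) (l x) (l z) = b2" "polar g (l z) (l z) (l x) = b2"
    unfolding a1_def a2_def b1_def b2_def
    using polar_commute12[OF assms(1)] polar_commute13[OF assms(1)]
      polar_commute12[OF assms(2)] polar_commute13[OF assms(2)] by metis+
  note simps = expand table f_z g_y a0_def[symmetric] a1_def[symmetric] a2_def[symmetric]
    a3_def[symmetric] b0_def[symmetric] b1_def[symmetric] b2_def[symmetric] b3_def[symmetric]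
  have "m1*a1 + m2*a2 = 0"
    using zero[of "l x" "l y"] by (simp add: simps)
  moreover have "m1*a2 + m2*a3 = 0"
    using zero[of "l y" "l y"] by (simp add: simps)
  moreover have "m1*b1 + m3*b2 = 0"
    using zero[of "l x" "l z"] assms(10) by (simp add: simps)
  moreover have "m1*b2 + m3*b3 = 0"
    using zero[of "l z" "l z"] assms(10) by (simp add: simps)
  moreover have "(m1*a0 + m2*a1) + t * (m1*b0 + m3*b1) = 0"
    using zero[of "l x" "l x"] unfolding expand by (simp add: simps algebra_simps)
  ultimately show ?thesis
    using m(1) by blast
qed

lemma pencil_rescale:
  fixes c d :: "'a::field"
  assumes "c \<noteq> 0" "d \<noteq> 0"
  shows "{(\<lambda>i j k. a * (c * F i j k) + b * (d * G i j k)) | a b. True}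
    = {(\<lambda>i j k. a * F i j k + b * G i j k) | a b. True}"
proof (intro set_eqI iffI)
  fix h
  assume "h \<in> {(\<lambda>i j k. a * (c * F i j k) + b * (d * G i j k)) | a b. True}"
  then obtain a b where "h = (\<lambda>i j k. (a * c) * F i j k + (b * d) * G i j k)"
    by (auto simp: mult.assoc)
  then show "h \<in> {(\<lambda>i j k. a * F i j k + b * G i j k) | a b. True}"
    by blast
next
  fix h
  assume "h \<in> {(\<lambda>i j k. a * F i j k + b * G i j k) | a b. True}"
  then obtain a b where "h = (\<lambda>i j k. (a / c) * (c * F i j k) + (b / d) * (d * G i j k))"
    using assms by auto
  then show "h \<in> {(\<lambda>i j k. a * (c * F i j k) + b * (d * G i j k)) | a b. True}"
    by blast
qed

lemma pencil_of_cubics_on_two_planes: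
  fixes f g :: "('a::field_char_0, 'n::finite) cubic"
  assumes "is_cubic_form f" "is_cubic_form g"
    and "vec.independent {x, y, z}" "x \<noteq> y" "x \<noteq> z" "y \<noteq> z"
    and "essential_space f = vec.span {x, y}" "essential_space g = vec.span {x, z}"
    and "\<And>a b. \<exists>p q. essential_space (\<lambda>i j k. a * f i j k + b * g i j k) \<subseteq> vec.span {p, q}"
  obtains y' z' where "lin_indep3 x y' z'"
    "{(\<lambda>i j k. a * f i j k + b * g i j k) | a b. True}
      = {(\<lambda>i j k. a * sym_mono x x y' i j k + b * sym_mono x x z' i j k) | a b. True}"
proof -
  obtain l where l: "dual_family {x, y, z} l"
    using dual_family_exists[OF assms(3)] .
  have l_xy: "dual_family {x, y} l" and l_xz: "dual_family {x, z} l"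
    using dual_family_subset[OF l] by auto
  define a0 a1 a2 a3 where "a0 = polar f (l x) (l x) (l x)" and "a1 = polar f (l x) (l x) (l y)"
    and "a2 = polar f (l x) (l y) (l y)" and "a3 = polar f (l y) (l y) (l y)"
  define b0 b1 b2 b3 where "b0 = polar g (l x) (l x) (l x)" and "b1 = polar g (l x) (l x) (l z)"
    and "b2 = polar g (l x) (l z) (l z)" and "b3 = polar g (l z) (l z) (l z)"
  note coeff_defs = a0_def a1_def a2_def a3_def b0_def b1_def b2_def b3_def
  have nondegenerate: "nondegenerate_binary a0 a1 a2 a3" "nondegenerate_binary b0 b1 b2 b3"
    unfolding coeff_defs
    by (rule nondegenerate_binary_polar[OF assms(1,4) l_xy assms(7)],
        rule nondegenerate_binary_polar[OF assms(2,5) l_xz assms(8)])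
  have kernel: "\<exists>m1 m2 m3. (m1, m2, m3) \<noteq> (0, 0, 0) \<and>
      m1*a1 + m2*a2 = 0 \<and> m1*a2 + m2*a3 = 0 \<and> m1*b1 + m3*b2 = 0 \<and> m1*b2 + m3*b3 = 0 \<and>
      (m1*a0 + m2*a1) + t * (m1*b0 + m3*b1) = 0" if "t \<in> {1, 2}" for t
  proof -
    obtain p q where "essential_space (\<lambda>i j k. f i j k + t * g i j k) \<subseteq> vec.span {p, q}"
      using assms(9)[of 1 t] by auto
    moreover have "t \<noteq> 0"
      using that by auto
    ultimately show ?thesis
      by (rule pencil_member_kernel_equations[OF assms(1,2) l assms(4-6)
          equalityD1[OF assms(7)] equalityD1[OF assms(8)], folded coeff_defs])
  qed
  have "a2 = 0 \<and> a3 = 0 \<and> b2 = 0 \<and> b3 = 0 \<and> a1 \<noteq> 0 \<and> b1 \<noteq> 0"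
    by (rule binary_pencil_coefficients[OF nondegenerate kernel])
  then have coeffs: "a2 = 0" "a3 = 0" "b2 = 0" "b3 = 0" "a1 \<noteq> 0" "b1 \<noteq> 0"
    by simp_all
  define y' z' where "y' = y + (a0 / (3 * a1)) *s x" and "z' = z + (b0 / (3 * b1)) *s x"
  have "f = (\<lambda>i j k. a1 / 2 * sym_mono x x y' i j k)" "g = (\<lambda>i j k. b1 / 2 * sym_mono x x z' i j k)"
    using binary_cubic_eq_sym_mono[OF assms(1,4) l_xy _ _ _ coeffs(5)[unfolded a1_def]]
      binary_cubic_eq_sym_mono[OF assms(2,5) l_xz _ _ _ coeffs(6)[unfolded b1_def]]
      coeffs(1-4) assms(7,8) unfolding y'_def z'_def coeff_defs by auto
  then have "{(\<lambda>i j k. a * f i j k + b * g i j k) | a b. True}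
      = {(\<lambda>i j k. a * sym_mono x x y' i j k + b * sym_mono x x z' i j k) | a b. True}"
    using pencil_rescale[of "a1 / 2" "b1 / 2"] coeffs(5,6) by simp
  moreover have "lin_indep3 x y' z'"
    unfolding y'_def z'_def
    by (intro lin_indep3_shear lin_indep3_if_independent assms(3-6))
  ultimately show ?thesis
    using that by blast
qed

lemma pencil_in_Sym3_2_if_dim_le_2:
  fixes f g :: "('a::field_char_0, 'n::finite) cubic"
  assumes "is_cubic_form f" "is_cubic_form g"
    and "vec.dim (vec.span (essential_space f \<union> essential_space g)) \<le> 2" "CARD('n) \<ge> 2"
  obtains x y where "lin_indep2 x y" "{(\<lambda>i j k. a * f i j k + b * g i j k) | a b. True} \<subseteq> Sym3_2 x y"
proof -
  obtain x y where xy: "vec.independent {x, y}" "x \<noteq> y"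
    "vec.span (essential_space f \<union> essential_space g) \<subseteq> vec.span {x, y}"
    by (rule subset_span_pair_if_dim_le_2[OF assms(3,4)])
  have "(\<lambda>i j k. a * f i j k + b * g i j k) \<in> Sym3_2 x y" for a b
    using essential_space_lincomb[of a f b g] xy(3)
    by (intro Sym3_2_if_essential_space_subset is_cubic_form_lincomb assms(1,2) xy(1,2)) blast
  then show ?thesis
    using that lin_indep2_if_independent[OF xy(1,2)] by blast
qed

lemma pencil_x2y_x2z_if_dim_gt_2:
  fixes f g :: "('a::field_char_0, 'n::finite) cubic"
  assumes "is_cubic_form f" "is_cubic_form g"
    and "\<And>a b. \<exists>p q. essential_space (\<lambda>i j k. a * f i j k + b * g i j k) \<subseteq> vec.span {p, q}"
    and "\<not> vec.dim (vec.span (essential_space f \<union> essential_space g)) \<le> 2"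
  obtains x y z where "lin_indep3 x y z"
    "{(\<lambda>i j k. a * f i j k + b * g i j k) | a b. True}
      = {(\<lambda>i j k. a * sym_mono x x y i j k + b * sym_mono x x z i j k) | a b. True}"
proof -
  have dim_le_2: "vec.dim (essential_space (\<lambda>i j k. a * f i j k + b * g i j k)) \<le> 2" for a b
    using assms(3)[of a b] dim_le_2_if_subset_span_pair by blast
  have meet: "essential_space f \<inter> essential_space g \<noteq> {0}"
  proof
    assume "essential_space f \<inter> essential_space g = {0}"
    then have "vec.dim (vec.span (essential_space f \<union> essential_space g))
        \<le> vec.dim (essential_space (\<lambda>i j k. f i j k + g i j k))"
      by (intro vec.dim_subset span_essential_spaces_subset_essential_space_add assms(1,2))
    then show False
      using assms(4) dim_le_2[of 1 1] by simp
  qed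
  have dims: "vec.dim (essential_space f) \<le> 2" "vec.dim (essential_space g) \<le> 2"
    using dim_le_2[of 1 0] dim_le_2[of 0 1] by simp_all
  obtain x y z where "vec.independent {x, y, z}" "x \<noteq> y" "x \<noteq> z" "y \<noteq> z"
    "essential_space f = vec.span {x, y}" "essential_space g = vec.span {x, z}"
    by (rule two_planes_meeting_in_line[OF subspace_essential_space subspace_essential_space
          dims meet assms(4)])
  then show ?thesis
    by (rule pencil_of_cubics_on_two_planes[OF assms(1,2) _ _ _ _ _ _ assms(3)]) (rule that)
qed

theorem lemma2p4:
  fixes W :: "('a::field_char_0, 'n::finite) cubic set"
  assumes "algebraically_closed TYPE('a)"
    and "CARD('n) \<ge> 3"
    and "pencil W"
    and "\<forall>f\<in>W. \<exists>x y. f \<in> Sym3_2 x y"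
  shows "(\<exists>x y. lin_indep2 x y \<and> W \<subseteq> Sym3_2 x y) \<or>
         (\<exists>x y z. lin_indep3 x y z \<and>
            W = {(\<lambda>i j k. a * sym_mono x x y i j k + b * sym_mono x x z i j k) | a b. True})"
proof -
  obtain f g where f: "is_cubic_form f" and g: "is_cubic_form g"
    and W: "W = {(\<lambda>i j k. a * f i j k + b * g i j k) | a b. True}"
    using assms(3) unfolding pencil_def by blast
  have in_plane: "\<exists>p q. essential_space (\<lambda>i j k. a * f i j k + b * g i j k) \<subseteq> vec.span {p, q}"
    for a b
  proof -
    have "(\<lambda>i j k. a * f i j k + b * g i j k) \<in> W"
      unfolding W by blast
    then show ?thesis
      using assms(4) essential_space_Sym3_2 by meson
  qed
  show ?thesis
  proof (cases "vec.dim (vec.span (essential_space f \<union> essential_space g)) \<le> 2")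
    case True
    moreover have "CARD('n) \<ge> 2"
      using assms(2) by simp
    ultimately obtain x y where "lin_indep2 x y" "W \<subseteq> Sym3_2 x y"
      unfolding W by (rule pencil_in_Sym3_2_if_dim_le_2[OF f g])
    then show ?thesis
      by blast
  next
    case False
    obtain x y z where "lin_indep3 x y z"
      "W = {(\<lambda>i j k. a * sym_mono x x y i j k + b * sym_mono x x z i j k) | a b. True}"
      unfolding W by (rule pencil_x2y_x2z_if_dim_gt_2[OF f g in_plane False])
    then show ?thesis
      by blast
  qed
qed

end
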